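(* Let $X$ be a set with exactly four elements and let $B_X$ be the monoid of binary relations on $X$. For every field $k$, the monoid algebra $kB_X$ is of infinite representation type.
   Context: The monoid of binary relations $B_X$ on a set $X$ consists of all subsets of $X\times X$, with multiplication given by composition of relations: $(R S) = \{(x,z): \exists y\in X,\ (x,y)\in R,\ (y,z)\in S\}$; the identity is the diagonal relation. A finite-dimensional $k$-algebra is of infinite representation type if it has infinitely many isomorphism classes of finite-dimensional indecomposable modules. *)

theory Defs
  imports Main "Jordan_Normal_Form.Matrix"
begin

text \<open>Binary relations on a (finite) type 'x; the monoid B_X has multiplication
  relcomp (O) and identity Id.\<close>
type_synonym 'x brel = "('x \<times> 'x) set"

text \<open>The monoid algebra k B_X: functions B_X -> k (finite support is automatic as
  the type 'x is finite), with pointwise addition / scalar multiplication and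
  convolution product.\<close>
type_synonym ('x, 'k) malg = "'x brel \<Rightarrow> 'k"

definition malg_add :: "('x, 'k::field) malg \<Rightarrow> ('x, 'k) malg \<Rightarrow> ('x, 'k) malg" where
  "malg_add a b = (\<lambda>T. a T + b T)"

definition malg_smult :: "'k::field \<Rightarrow> ('x, 'k) malg \<Rightarrow> ('x, 'k) malg" where
  "malg_smult c a = (\<lambda>T. c * a T)"

definition malg_mult :: "('x::finite, 'k::field) malg \<Rightarrow> ('x, 'k) malg \<Rightarrow> ('x, 'k) malg" where
  "malg_mult a b = (\<lambda>T. \<Sum>p\<in>{(R, S). R O S = T}. a (fst p) * b (snd p))"

definition malg_one :: "('x, 'k::field) malg" where
  "malg_one = (\<lambda>T. if T = Id then 1 else 0)"

text \<open>A finite-dimensional (left) module over k B_X of dimension n, written in a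
  basis: a unital k-algebra homomorphism k B_X -> M_n(k).\<close>
definition is_rep :: "nat \<Rightarrow> (('x::finite, 'k::field) malg \<Rightarrow> 'k mat) \<Rightarrow> bool" where
  "is_rep n \<rho> \<longleftrightarrow>
     (\<forall>a. \<rho> a \<in> carrier_mat n n) \<and>
     (\<forall>a b. \<rho> (malg_add a b) = \<rho> a + \<rho> b) \<and>
     (\<forall>c a. \<rho> (malg_smult c a) = c \<cdot>\<^sub>m \<rho> a) \<and>
     (\<forall>a b. \<rho> (malg_mult a b) = \<rho> a * \<rho> b) \<and>
     \<rho> malg_one = 1\<^sub>m n"

definition rep_iso :: "nat \<Rightarrow> (('x::finite, 'k::field) malg \<Rightarrow> 'k mat)
    \<Rightarrow> nat \<Rightarrow> (('x, 'k) malg \<Rightarrow> 'k mat) \<Rightarrow> bool" where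
  "rep_iso n \<rho> m \<sigma> \<longleftrightarrow> n = m \<and>
     (\<exists>P \<in> carrier_mat n n. invertible_mat P \<and> (\<forall>a. P * \<rho> a = \<sigma> a * P))"

definition rep_dsum :: "nat \<Rightarrow> (('x::finite, 'k::field) malg \<Rightarrow> 'k mat)
    \<Rightarrow> nat \<Rightarrow> (('x, 'k) malg \<Rightarrow> 'k mat) \<Rightarrow> (('x, 'k) malg \<Rightarrow> 'k mat)" where
  "rep_dsum n1 \<rho>1 n2 \<rho>2 =
     (\<lambda>a. four_block_mat (\<rho>1 a) (0\<^sub>m n1 n2) (0\<^sub>m n2 n1) (\<rho>2 a))"

definition indecomposable :: "nat \<Rightarrow> (('x::finite, 'k::field) malg \<Rightarrow> 'k mat) \<Rightarrow> bool" where
  "indecomposable n \<rho> \<longleftrightarrow> is_rep n \<rho> \<and> n > 0 \<and>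
     \<not> (\<exists>n1 n2 \<rho>1 \<rho>2. n1 > 0 \<and> n2 > 0 \<and> is_rep n1 \<rho>1 \<and> is_rep n2 \<rho>2 \<and>
            rep_iso n \<rho> (n1 + n2) (rep_dsum n1 \<rho>1 n2 \<rho>2))"

definition indec_reps :: "(nat \<times> (('x::finite, 'k::field) malg \<Rightarrow> 'k mat)) set" where
  "indec_reps = {(n, \<rho>). indecomposable n \<rho>}"

definition iso_rel :: "((nat \<times> (('x::finite, 'k::field) malg \<Rightarrow> 'k mat)) \<times>
                        (nat \<times> (('x, 'k) malg \<Rightarrow> 'k mat))) set" where
  "iso_rel = {((n, \<rho>), (m, \<sigma>)). rep_iso n \<rho> m \<sigma>}"

definition infinite_rep_type :: "'x::finite itself \<Rightarrow> 'k::field itself \<Rightarrow> bool" where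
  "infinite_rep_type _ _ \<longleftrightarrow>
     infinite ((indec_reps :: (nat \<times> (('x, 'k) malg \<Rightarrow> 'k mat)) set) // iso_rel)"

end

theory Submission
  imports Defs
begin

text \<open>
  The units of \<open>B\<^sub>X\<close> are the permutations. Call a relation irreducible if it is not a unit and
  every factorisation of it has a unit factor. Then a product lies in the two-sided orbit \<open>G P G\<close>
  of an irreducible \<open>P\<close> under the unit group \<open>G\<close> iff one factor is a unit and the other lies in
  \<open>G P G\<close>. So two irreducible relations with different orbits \<open>A\<close> and \<open>B\<close> give an algebra map from
  \<open>k B\<^sub>X\<close> onto \<open>k[x,y]/(x,y)\<^sup>2\<close> sending the units to 1, \<open>A\<close> to \<open>x\<close>, \<open>B\<close> to \<open>y\<close> and all other
  relations to 0. On four points such relations exist: their rows have at most two elements,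
  and the two-element rows form a cycle. Pulling back the Kronecker modules of dimension
  \<open>2n+1\<close>, on which \<open>x\<close> and \<open>y\<close> act as the two coordinate projections \<open>k\<^sup>n\<^sup>+\<^sup>1 \<rightarrow> k\<^sup>n\<close>, gives
  indecomposable modules of pairwise different dimensions, since their only idempotent
  endomorphisms are 0 and 1.
\<close>

section \<open>Invertible relations and their two-sided orbits\<close>

definition invertible_rel :: "'x rel \<Rightarrow> bool" where
  "invertible_rel R \<longleftrightarrow> (\<exists>S. R O S = Id \<and> S O R = Id)"

lemma invertible_rel_Id: "invertible_rel Id"
  unfolding invertible_rel_def by blast

lemma invertible_rel_relcomp:
  assumes "invertible_rel R" "invertible_rel S"
  shows "invertible_rel (R O S)"
proof -
  obtain R' S' where "R O R' = Id" "R' O R = Id" "S O S' = Id" "S' O S = Id"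
    using assms unfolding invertible_rel_def by blast
  then have "(R O S) O (S' O R') = Id \<and> (S' O R') O (R O S) = Id"
    by (metis O_assoc R_O_Id)
  then show ?thesis unfolding invertible_rel_def by blast
qed

lemma invertible_relE:
  assumes "invertible_rel R"
  obtains S where "invertible_rel S" "R O S = Id" "S O R = Id"
  using assms unfolding invertible_rel_def by blast

lemma invertible_rel_rows:
  assumes "invertible_rel R"
  obtains f where "bij f" "\<And>x. R``{x} = {f x}"
proof -
  obtain S where RS: "R O S = Id" and SR: "S O R = Id"
    using assms unfolding invertible_rel_def by blast
  have conv: "(y, x) \<in> S" if "(x, y) \<in> R" for x y
  proof -
    have "(y, y) \<in> S O R" using SR by simp
    then obtain w where "(y, w) \<in> S" "(w, y) \<in> R" by blast
    with that have "(x, w) \<in> Id" using RS by blast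
    with \<open>(y, w) \<in> S\<close> show ?thesis by simp
  qed
  have "\<exists>y. R``{x} = {y}" for x
  proof -
    have "(x, x) \<in> R O S" using RS by simp
    then obtain y where "(x, y) \<in> R" by blast
    moreover have "y' = y" if "(x, y') \<in> R" for y'
      using conv[OF \<open>(x, y) \<in> R\<close>] that SR by blast
    ultimately show ?thesis by blast
  qed
  then obtain f where f: "\<And>x. R``{x} = {f x}" by metis
  have "inj f"
  proof (rule injI)
    fix x x' assume "f x = f x'"
    then have "(x, f x) \<in> R" "(x', f x) \<in> R" using f by (metis Image_singleton_iff singletonI)+
    then show "x = x'" using conv RS by blast
  qed
  moreover have "surj f"
  proof -
    have "y \<in> range f" for y
    proof -
      have "(y, y) \<in> S O R" using SR by simp
      then obtain w where "(w, y) \<in> R" by blast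
      then show ?thesis using f by (metis Image_singleton_iff rangeI singletonD)
    qed
    then show ?thesis by blast
  qed
  ultimately show ?thesis using f that by (simp add: bij_def)
qed

lemma invertible_relI:
  fixes f :: "'x::finite \<Rightarrow> 'x"
  assumes "inj f" "\<And>x. R``{x} = {f x}"
  shows "invertible_rel R"
proof -
  have "surj f" using assms(1) finite_UNIV_inj_surj[of f] by simp
  have R: "(x, y) \<in> R \<longleftrightarrow> y = f x" for x y using assms(2) by blast
  have "R O R\<inverse> = Id" using R \<open>inj f\<close> by (auto dest: injD)
  moreover have "R\<inverse> O R = Id"
  proof -
    have "(y, y) \<in> R\<inverse> O R" for y
      using R \<open>surj f\<close> by (metis converse_iff relcompI surjD)
    then show ?thesis using R by auto
  qed
  ultimately show ?thesis unfolding invertible_rel_def by blast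
qed

lemma card_Image_invertible_rel:
  assumes "invertible_rel R"
  shows "card (R``A) = card A"
proof -
  obtain f where "bij f" "\<And>x. R``{x} = {f x}" using invertible_rel_rows[OF assms] by blast
  then have "R``A = f ` A" by (auto simp: Image_def)
  moreover have "inj_on f A" using bij_is_inj[OF \<open>bij f\<close>] by (rule inj_on_subset) simp
  ultimately show ?thesis by (simp add: card_image)
qed

text \<open>Left multiplication by \<open>S\<close> is injective, hence surjective on the finite monoid.\<close>
lemma relcomp_eq_Id_commute:
  fixes R S :: "'x::finite rel"
  assumes "R O S = Id"
  shows "S O R = Id"
proof -
  have "inj (\<lambda>T :: 'x rel. S O T)"
  proof (rule injI)
    fix T T' :: "'x rel" assume "S O T = S O T'"
    then have "R O (S O T) = R O (S O T')" by simp
    then show "T = T'" using assms by (simp add: O_assoc[symmetric])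
  qed
  then have "surj (\<lambda>T :: 'x rel. S O T)" by (simp add: finite_UNIV_inj_surj)
  then obtain C where C: "S O C = Id" by (metis surjD)
  have "R = R O (S O C)" using C by simp
  also have "\<dots> = C" using assms by (simp add: O_assoc[symmetric])
  finally show ?thesis using C by simp
qed

lemma invertible_rel_relcompD:
  fixes R S :: "'x::finite rel"
  assumes "invertible_rel (R O S)"
  shows "invertible_rel R" "invertible_rel S"
proof -
  obtain U where U: "(R O S) O U = Id" "U O (R O S) = Id"
    using assms unfolding invertible_rel_def by blast
  have "R O (S O U) = Id" using U(1) by (simp add: O_assoc)
  then have "(S O U) O R = Id" by (rule relcomp_eq_Id_commute)
  with \<open>R O (S O U) = Id\<close> show "invertible_rel R" unfolding invertible_rel_def by blast
  have "(U O R) O S = Id" using U(2) by (simp add: O_assoc)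
  then have "S O (U O R) = Id" by (rule relcomp_eq_Id_commute)
  with \<open>(U O R) O S = Id\<close> show "invertible_rel S" unfolding invertible_rel_def by blast
qed

definition unit_orbit :: "'x rel \<Rightarrow> 'x rel set" where
  "unit_orbit P = {S O P O T | S T. invertible_rel S \<and> invertible_rel T}"

lemma unit_orbitI: "invertible_rel S \<Longrightarrow> invertible_rel T \<Longrightarrow> S O P O T \<in> unit_orbit P"
  unfolding unit_orbit_def by blast

lemma unit_orbitE:
  assumes "Q \<in> unit_orbit P"
  obtains S T where "invertible_rel S" "invertible_rel T" "Q = S O P O T"
  using assms unfolding unit_orbit_def by blast

lemma self_in_unit_orbit: "P \<in> unit_orbit P"
  using unit_orbitI[OF invertible_rel_Id invertible_rel_Id] by simp

lemma relcomp_left_in_unit_orbit: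
  assumes "invertible_rel S" "Q \<in> unit_orbit P"
  shows "S O Q \<in> unit_orbit P"
  using assms by (elim unit_orbitE) (metis O_assoc invertible_rel_relcomp unit_orbitI)

lemma relcomp_right_in_unit_orbit:
  assumes "invertible_rel T" "Q \<in> unit_orbit P"
  shows "Q O T \<in> unit_orbit P"
  using assms by (elim unit_orbitE) (metis O_assoc invertible_rel_relcomp unit_orbitI)

lemma unit_orbit_sym:
  assumes "Q \<in> unit_orbit P"
  shows "P \<in> unit_orbit Q"
proof -
  obtain S T where "invertible_rel S" "invertible_rel T" "Q = S O P O T"
    using assms by (rule unit_orbitE)
  moreover obtain S' where "invertible_rel S'" "S' O S = Id" using \<open>invertible_rel S\<close> by (rule invertible_relE)
  moreover obtain T' where "invertible_rel T'" "T O T' = Id" using \<open>invertible_rel T\<close> by (rule invertible_relE)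
  ultimately have "P = S' O Q O T'" by (simp add: O_assoc[symmetric]) (simp add: O_assoc)
  then show ?thesis using \<open>invertible_rel S'\<close> \<open>invertible_rel T'\<close> unit_orbitI by blast
qed

lemma row_cards_unit_orbit:
  assumes "Q \<in> unit_orbit P"
  shows "range (\<lambda>x. card (Q``{x})) = range (\<lambda>x. card (P``{x}))"
proof -
  have le: "range (\<lambda>x. card (Q``{x})) \<subseteq> range (\<lambda>x. card (P``{x}))"
    if "Q \<in> unit_orbit P" for P Q :: "'a rel"
  proof -
    obtain S T where "invertible_rel S" "invertible_rel T" "Q = S O P O T"
      using \<open>Q \<in> unit_orbit P\<close> by (rule unit_orbitE)
    moreover obtain f where "\<And>x. S``{x} = {f x}"
      using \<open>invertible_rel S\<close> by (metis invertible_rel_rows)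
    ultimately have "card (Q``{x}) = card (P``{f x})" for x
      by (simp add: relcomp_Image card_Image_invertible_rel)
    then show ?thesis by auto
  qed
  show ?thesis using le[OF assms] le[OF unit_orbit_sym[OF assms]] by blast
qed

lemma unit_orbits_disjoint:
  assumes "range (\<lambda>x. card (P``{x})) \<noteq> range (\<lambda>x. card (Q``{x}))"
  shows "unit_orbit P \<inter> unit_orbit Q = {}"
proof -
  have False if "T \<in> unit_orbit P" "T \<in> unit_orbit Q" for T
    using row_cards_unit_orbit[OF that(1)] row_cards_unit_orbit[OF that(2)] assms by simp
  then show ?thesis by blast
qed

definition irreducible_rel :: "'x rel \<Rightarrow> bool" where
  "irreducible_rel P \<longleftrightarrow> \<not> invertible_rel P \<and> (\<forall>R S. R O S = P \<longrightarrow> invertible_rel R \<or> invertible_rel S)"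

lemma relcomp_in_unit_orbit_iff:
  fixes P :: "'x::finite rel"
  assumes "irreducible_rel P"
  shows "R O S \<in> unit_orbit P \<longleftrightarrow>
    invertible_rel R \<and> S \<in> unit_orbit P \<or> R \<in> unit_orbit P \<and> invertible_rel S"
proof
  assume RS: "R O S \<in> unit_orbit P"
  then obtain U V where "invertible_rel U" "invertible_rel V" "P = U O (R O S) O V"
    using unit_orbit_sym by (metis unit_orbitE)
  then have "invertible_rel (U O R) \<or> invertible_rel (S O V)"
    using assms unfolding irreducible_rel_def by (metis O_assoc)
  then have "invertible_rel R \<or> invertible_rel S"
    using invertible_rel_relcompD by blast
  then show "invertible_rel R \<and> S \<in> unit_orbit P \<or> R \<in> unit_orbit P \<and> invertible_rel S"
  proof
    assume "invertible_rel R"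
    moreover obtain R' where "invertible_rel R'" "R' O R = Id" using \<open>invertible_rel R\<close> by (rule invertible_relE)
    ultimately show ?thesis using relcomp_left_in_unit_orbit[OF _ RS, of R'] by (simp add: O_assoc[symmetric])
  next
    assume "invertible_rel S"
    moreover obtain S' where "invertible_rel S'" "S O S' = Id" using \<open>invertible_rel S\<close> by (rule invertible_relE)
    ultimately show ?thesis using relcomp_right_in_unit_orbit[OF _ RS, of S'] by (simp add: O_assoc)
  qed
next
  assume "invertible_rel R \<and> S \<in> unit_orbit P \<or> R \<in> unit_orbit P \<and> invertible_rel S"
  then show "R O S \<in> unit_orbit P"
    using relcomp_left_in_unit_orbit relcomp_right_in_unit_orbit by blast
qed

lemma unit_orbit_not_invertible:
  fixes P :: "'x::finite rel"
  assumes "irreducible_rel P" "Q \<in> unit_orbit P"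
  shows "\<not> invertible_rel Q"
  using assms unfolding irreducible_rel_def
  by (metis unit_orbit_sym unit_orbitE invertible_rel_relcomp)

section \<open>A criterion for irreducibility\<close>

lemma inj_of_range_subset:
  fixes f g :: "'a::finite \<Rightarrow> 'b"
  assumes "inj f" "range f \<subseteq> range g"
  shows "inj g" "range g = range f"
proof -
  have "card (UNIV :: 'a set) = card (range f)" using assms(1) by (simp add: card_image)
  also have "\<dots> \<le> card (range g)" using assms(2) by (simp add: card_mono)
  finally have card_g: "card (range g) = card (UNIV :: 'a set)" using card_image_le[of UNIV g] by simp
  then show "inj g" by (simp add: eq_card_imp_inj_on)
  have "range f = range g"
    using assms card_g by (intro card_subset_eq) (simp_all add: card_image)
  then show "range g = range f" by simp
qed

lemma invertible_rel_of_singleton_rows: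
  fixes S :: "'x::finite rel"
  assumes "\<And>z. {z} \<in> range (\<lambda>y. S``{y})"
  shows "invertible_rel S"
proof -
  have inj_singleton: "inj (\<lambda>z. {z} :: 'x set)" by (simp add: inj_on_def)
  moreover have "range (\<lambda>z. {z}) \<subseteq> range (\<lambda>y. S``{y})" using assms by blast
  ultimately have "inj (\<lambda>y. S``{y})" "range (\<lambda>y. S``{y}) = range (\<lambda>z. {z})"
    by (rule inj_of_range_subset)+
  define f where "f y = (SOME z. S``{y} = {z})" for y
  have f: "S``{y} = {f y}" for y
  proof -
    have "\<exists>z. S``{y} = {z}" using \<open>range (\<lambda>y. S``{y}) = range (\<lambda>z. {z})\<close> by blast
    then show ?thesis unfolding f_def by (rule someI_ex)
  qed
  have "inj f"
  proof (rule injI)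
    fix y y' assume "f y = f y'"
    then have "S``{y} = S``{y'}" using f by simp
    then show "y = y'" using \<open>inj (\<lambda>y. S``{y})\<close> by (simp add: inj_on_def)
  qed
  then show ?thesis using f by (rule invertible_relI)
qed

lemma invertible_rel_left_factor:
  fixes R S P :: "'x::finite rel"
  assumes P: "R O S = P"
    and nonempty: "\<And>x. P``{x} \<noteq> {}"
    and antichain: "\<And>x x'. P``{x} \<subseteq> P``{x'} \<Longrightarrow> x = x'"
    and rows: "range (\<lambda>x. P``{x}) \<subseteq> range (\<lambda>y. S``{y})"
  shows "invertible_rel R"
proof -
  have "inj (\<lambda>x. P``{x})" using antichain by (simp add: inj_on_def)
  then have injS: "inj (\<lambda>y. S``{y})" and rangeS: "range (\<lambda>y. S``{y}) = range (\<lambda>x. P``{x})"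
    using inj_of_range_subset rows by blast+
  define g where "g x = (SOME y. S``{y} = P``{x})" for x
  have g: "S``{g x} = P``{x}" for x
  proof -
    have "\<exists>y. S``{y} = P``{x}" using rows by blast
    then show ?thesis unfolding g_def by (rule someI_ex)
  qed
  have "R``{x} = {g x}" for x
  proof -
    have "y = g x" if "y \<in> R``{x}" for y
    proof -
      obtain x' where x': "S``{y} = P``{x'}" using rangeS by blast
      moreover have "S``{y} \<subseteq> P``{x}" using that P by blast
      ultimately have "x' = x" using antichain by simp
      then have "S``{y} = S``{g x}" using x' g by simp
      then show "y = g x" using injS by (simp add: inj_on_def)
    qed
    moreover have "R``{x} \<noteq> {}" using nonempty[of x] P by blast
    ultimately show ?thesis by blast
  qed
  moreover have "inj g"
  proof (rule injI)
    fix x x' assume "g x = g x'"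
    then have "P``{x} = P``{x'}" using g by metis
    then show "x = x'" using antichain by simp
  qed
  ultimately show ?thesis by (intro invertible_relI[of g])
qed

lemma row_of_relcomp_in_rows_or_singletons:
  fixes R S :: "'x::finite rel"
  assumes "card ((R O S)``{x}) \<le> 2"
  shows "(R O S)``{x} \<in> range (\<lambda>y. S``{y}) \<or> (\<forall>z \<in> (R O S)``{x}. {z} \<in> range (\<lambda>y. S``{y}))"
proof -
  have "{z} \<in> range (\<lambda>y. S``{y})"
    if not_row: "(R O S)``{x} \<notin> range (\<lambda>y. S``{y})" and "z \<in> (R O S)``{x}" for z
  proof -
    obtain y where "(x, y) \<in> R" "z \<in> S``{y}" using \<open>z \<in> (R O S)``{x}\<close> by blast
    then have "S``{y} \<subset> (R O S)``{x}" using not_row by blast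
    then have "card (S``{y}) < card ((R O S)``{x})" by (simp add: psubset_card_mono)
    then have "card (S``{y}) \<le> 1" using assms by linarith
    then have "S``{y} = {z}" using \<open>z \<in> S``{y}\<close> card_le_Suc0_iff_eq[of "S``{y}"] by auto
    then show ?thesis by (metis rangeI)
  qed
  then show ?thesis by blast
qed

lemma invertible_rel_row_card:
  assumes "invertible_rel R"
  shows "card (R``{x}) = 1"
  using card_Image_invertible_rel[OF assms, of "{x}"] by simp

lemma closed_if_card_Union_rows_le:
  fixes P :: "'x::finite rel"
  assumes rows: "\<And>x. x \<in> M \<Longrightarrow> card (P``{x}) = 2"
    and cols: "\<And>z. card (P\<inverse>``{z}) \<le> 2"
    and le: "card (\<Union>x\<in>M. P``{x}) \<le> card M"
    and "x \<in> M" "z \<in> P``{x}"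
  shows "P\<inverse>``{z} \<subseteq> M"
proof -
  let ?U = "\<Union>x\<in>M. P``{x}"
  have "2 * card M = (\<Sum>x\<in>M. card (P``{x}))" using rows by simp
  also have "\<dots> = card (SIGMA x:M. P``{x})" by simp
  also have "(SIGMA x:M. P``{x}) = (\<lambda>(z, x). (x, z)) ` (SIGMA z:?U. P\<inverse>``{z} \<inter> M)" by auto
  also have "card \<dots> = card (SIGMA z:?U. P\<inverse>``{z} \<inter> M)" by (rule card_image) (auto simp: inj_on_def)
  also have "\<dots> = (\<Sum>z\<in>?U. card (P\<inverse>``{z} \<inter> M))" by simp
  finally have sum_eq: "(\<Sum>z\<in>?U. card (P\<inverse>``{z} \<inter> M)) = 2 * card M" ..
  have col_le: "card (P\<inverse>``{z'} \<inter> M) \<le> 2" for z'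
    using cols[of z'] card_mono[of "P\<inverse>``{z'}" "P\<inverse>``{z'} \<inter> M"] by simp
  have "card (P\<inverse>``{z} \<inter> M) = 2"
  proof (rule ccontr)
    assume "card (P\<inverse>``{z} \<inter> M) \<noteq> 2"
    then have "(\<Sum>z\<in>?U. card (P\<inverse>``{z} \<inter> M)) < (\<Sum>z\<in>?U. 2)"
      using col_le \<open>x \<in> M\<close> \<open>z \<in> P``{x}\<close> by (intro sum_strict_mono_ex1) (auto simp: le_less)
    then show False using sum_eq le by simp
  qed
  then have "P\<inverse>``{z} \<inter> M = P\<inverse>``{z}"
    using cols[of z] card_mono[of "P\<inverse>``{z}" "P\<inverse>``{z} \<inter> M"] by (intro card_subset_eq) auto
  then show ?thesis by blast
qed

lemma card_Union_rows_outside_le: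
  fixes P :: "'x::finite rel"
  assumes "card W \<le> card (UNIV :: 'x set)"
    and antichain: "\<And>x x'. P``{x} \<subseteq> P``{x'} \<Longrightarrow> x = x'"
    and split: "\<And>x. P``{x} \<in> W \<or> (\<forall>z \<in> P``{x}. {z} \<in> W)"
  shows "card (\<Union>x\<in>{x. P``{x} \<notin> W}. P``{x}) \<le> card {x. P``{x} \<notin> W}"
proof -
  define M where "M = {x. P``{x} \<notin> W}"
  let ?U = "\<Union>x\<in>M. P``{x}"
  have sub: "(\<lambda>x. P``{x}) ` (- M) \<union> (\<lambda>z. {z}) ` ?U \<subseteq> W"
    using split unfolding M_def by blast
  have disj: "(\<lambda>x. P``{x}) ` (- M) \<inter> (\<lambda>z. {z}) ` ?U = {}"
  proof -
    have "P``{x'} \<noteq> {z}" if "x' \<notin> M" "x \<in> M" "z \<in> P``{x}" for x x' z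
    proof
      assume "P``{x'} = {z}"
      then have "x' = x" using antichain that(3) by simp
      then show False using that by simp
    qed
    then show ?thesis by blast
  qed
  have "card ((\<lambda>x. P``{x}) ` (- M)) = card (- M)"
    by (rule card_image) (use antichain in \<open>simp add: inj_on_def\<close>)
  moreover have "card ((\<lambda>z. {z}) ` ?U) = card ?U"
    by (rule card_image) (simp add: inj_on_def)
  ultimately have "card (- M) + card ?U = card ((\<lambda>x. P``{x}) ` (- M) \<union> (\<lambda>z. {z}) ` ?U)"
    using disj by (simp add: card_Un_disjoint)
  also have "\<dots> \<le> card W"
    using sub by (simp add: card_mono)
  also have "\<dots> \<le> card (- M) + card M"
    using assms(1) card_Un_disjoint[of M "- M"] by (simp add: Un_commute)
  finally show ?thesis unfolding M_def by simp
qed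

text \<open>
  If \<open>P = R O S\<close>, each row of \<open>P\<close> is a row of \<open>S\<close> or a union of singleton rows of \<open>S\<close>. As \<open>S\<close> has
  at most \<open>|X|\<close> rows, the rows of \<open>P\<close> that are not rows of \<open>S\<close> cover at most as many points as
  there are of them; by double counting they are closed under sharing a point, so by
  connectedness there are none (then \<open>R\<close> is a permutation) or they are all two-element rows (then
  \<open>S\<close> is).
\<close>
lemma irreducible_relI:
  fixes P :: "'x::finite rel"
  assumes nonempty: "\<And>x. P``{x} \<noteq> {}"
    and small: "\<And>x. card (P``{x}) \<le> 2"
    and antichain: "\<And>x x'. P``{x} \<subseteq> P``{x'} \<Longrightarrow> x = x'"
    and cols: "\<And>z. card (P\<inverse>``{z}) \<le> 2"
    and covering: "\<And>z. \<exists>x. z \<in> P``{x}"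
    and connected: "\<And>M. (\<And>x. x \<in> M \<Longrightarrow> card (P``{x}) = 2) \<Longrightarrow>
      (\<And>x z. x \<in> M \<Longrightarrow> z \<in> P``{x} \<Longrightarrow> P\<inverse>``{z} \<subseteq> M) \<Longrightarrow> M = {} \<or> M = {x. card (P``{x}) = 2}"
    and "card (P``{x\<^sub>0}) = 2"
  shows "irreducible_rel P"
  unfolding irreducible_rel_def
proof (intro conjI allI impI)
  show "\<not> invertible_rel P"
  proof
    assume "invertible_rel P"
    then have "card (P``{x\<^sub>0}) = 1" by (rule invertible_rel_row_card)
    with \<open>card (P``{x\<^sub>0}) = 2\<close> show False by simp
  qed
next
  fix R S :: "'x rel" assume RS: "R O S = P"
  define W where "W = range (\<lambda>y. S``{y})"
  define M where "M = {x. P``{x} \<notin> W}"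
  have split: "P``{x} \<in> W \<or> (\<forall>z \<in> P``{x}. {z} \<in> W)" for x
    using row_of_relcomp_in_rows_or_singletons[of R S x] small RS unfolding W_def by simp
  have M_card: "card (P``{x}) = 2" if "x \<in> M" for x
  proof -
    have "\<not> card (P``{x}) \<le> 1"
    proof
      assume "card (P``{x}) \<le> 1"
      then obtain z where "P``{x} = {z}"
        using nonempty[of x] card_le_Suc0_iff_eq[of "P``{x}"] by auto
      then show False using that split[of x] unfolding M_def by simp
    qed
    then show ?thesis using small[of x] by simp
  qed
  have "card W \<le> card (UNIV :: 'x set)" unfolding W_def by (rule card_image_le) simp
  then have count: "card (\<Union>x\<in>M. P``{x}) \<le> card M"
    unfolding M_def using antichain split by (rule card_Union_rows_outside_le)
  have "P\<inverse>``{z} \<subseteq> M" if "x \<in> M" "z \<in> P``{x}" for x z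
    by (rule closed_if_card_Union_rows_le[OF M_card cols count that])
  then consider "M = {}" | "M = {x. card (P``{x}) = 2}" using connected[OF M_card] by blast
  then show "invertible_rel R \<or> invertible_rel S"
  proof cases
    case 1
    then have "range (\<lambda>x. P``{x}) \<subseteq> range (\<lambda>y. S``{y})" unfolding M_def W_def by blast
    with RS nonempty antichain have "invertible_rel R" by (rule invertible_rel_left_factor)
    then show ?thesis ..
  next
    case 2
    have "{z} \<in> W" for z
    proof -
      obtain x where x: "z \<in> P``{x}" using covering by blast
      show ?thesis
      proof (cases "card (P``{x}) = 2")
        case True
        then show ?thesis using 2 x split[of x] unfolding M_def by blast
      next
        case False
        then have "P``{x} = {z}"
          using x small[of x] card_le_Suc0_iff_eq[of "P``{x}"] by auto
        moreover have "x \<notin> M" using 2 False by simp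
        ultimately show ?thesis unfolding M_def by simp
      qed
    qed
    then have "invertible_rel S" unfolding W_def by (rule invertible_rel_of_singleton_rows)
    then show ?thesis ..
  qed
qed

section \<open>Two irreducible relations on four points\<close>

definition path_rel :: "'x \<Rightarrow> 'x \<Rightarrow> 'x \<Rightarrow> 'x \<Rightarrow> 'x rel" where
  "path_rel a b c d = {(a,a),(a,b),(b,a),(b,c),(c,b),(c,d),(d,c),(d,d)}"

definition loop_path_rel :: "'x \<Rightarrow> 'x \<Rightarrow> 'x \<Rightarrow> 'x \<Rightarrow> 'x rel" where
  "loop_path_rel a b c d = {(a,a),(b,b),(b,c),(c,b),(c,d),(d,c),(d,d)}"

context
  fixes a b c d :: "'x::finite"
  assumes distinct: "distinct [a, b, c, d]" and UNIV_eq: "UNIV = {a, b, c, d}"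
begin

lemma in_UNIV_eq: "x \<in> {a, b, c, d}"
  using UNIV_eq by blast

lemma path_rel_rows:
  "path_rel a b c d``{a} = {a, b}" "path_rel a b c d``{b} = {a, c}"
  "path_rel a b c d``{c} = {b, d}" "path_rel a b c d``{d} = {c, d}"
  using distinct by (auto simp: path_rel_def)

lemma loop_path_rel_rows:
  "loop_path_rel a b c d``{a} = {a}" "loop_path_rel a b c d``{b} = {b, c}"
  "loop_path_rel a b c d``{c} = {b, d}" "loop_path_rel a b c d``{d} = {c, d}"
  using distinct by (auto simp: loop_path_rel_def)

lemma card_path_rel_row: "card (path_rel a b c d``{x}) = 2"
  using in_UNIV_eq[of x] distinct by (auto simp: path_rel_rows)

lemma card_loop_path_rel_row: "card (loop_path_rel a b c d``{x}) = (if x = a then 1 else 2)"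
  using in_UNIV_eq[of x] distinct by (auto simp: loop_path_rel_rows)

lemma row_cards_path_rel_loop_path_rel:
  "range (\<lambda>x. card (path_rel a b c d``{x})) \<noteq> range (\<lambda>x. card (loop_path_rel a b c d``{x}))"
proof -
  have "1 \<in> range (\<lambda>x. card (loop_path_rel a b c d``{x}))"
    using card_loop_path_rel_row[of a] by (metis rangeI)
  moreover have "1 \<notin> range (\<lambda>x. card (path_rel a b c d``{x}))"
    using card_path_rel_row by auto
  ultimately show ?thesis by blast
qed

lemma irreducible_path_rel: "irreducible_rel (path_rel a b c d)"
proof -
  let ?P = "path_rel a b c d"
  have sym: "?P\<inverse> = ?P" by (auto simp: path_rel_def)
  note card_rows = card_path_rel_row
  show ?thesis
  proof (rule irreducible_relI[of _ a])
    show "?P``{x} \<noteq> {}" for x using card_rows[of x] by auto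
    show "card (?P``{x}) \<le> 2" "card (?P\<inverse>``{x}) \<le> 2" "card (?P``{a}) = 2" for x
      using card_rows sym by simp_all
    show "x = x'" if "?P``{x} \<subseteq> ?P``{x'}" for x x'
      using that in_UNIV_eq[of x] in_UNIV_eq[of x'] distinct by (auto simp: path_rel_rows)
    show "\<exists>x. z \<in> ?P``{x}" for z
      using in_UNIV_eq[of z] path_rel_rows by blast
    show "M = {} \<or> M = {x. card (?P``{x}) = 2}"
      if closed: "\<And>x z. x \<in> M \<Longrightarrow> z \<in> ?P``{x} \<Longrightarrow> ?P\<inverse>``{z} \<subseteq> M" for M
    proof -
      have step: "x' \<in> M" if "x \<in> M" "(x, z) \<in> ?P" "(x', z) \<in> ?P" for x x' z
        using closed[of x z] that by blast
      have "(a, a) \<in> ?P" "(b, a) \<in> ?P" "(a, b) \<in> ?P" "(c, b) \<in> ?P" "(c, d) \<in> ?P" "(d, d) \<in> ?P"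
        by (simp_all add: path_rel_def)
      then have "a \<in> M \<longleftrightarrow> b \<in> M" "a \<in> M \<longleftrightarrow> c \<in> M" "c \<in> M \<longleftrightarrow> d \<in> M"
        using step by meson+
      moreover have "{x. card (?P``{x}) = 2} = {a, b, c, d}" using card_rows UNIV_eq by auto
      ultimately show ?thesis using UNIV_eq by (cases "a \<in> M") auto
    qed
  qed
qed

lemma irreducible_loop_path_rel: "irreducible_rel (loop_path_rel a b c d)"
proof -
  let ?P = "loop_path_rel a b c d"
  have sym: "?P\<inverse> = ?P" by (auto simp: loop_path_rel_def)
  note card_rows = card_loop_path_rel_row
  show ?thesis
  proof (rule irreducible_relI[of _ b])
    show "?P``{x} \<noteq> {}" for x using card_rows[of x] by (metis card.empty one_neq_zero zero_neq_numeral)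
    show "card (?P``{x}) \<le> 2" "card (?P\<inverse>``{x}) \<le> 2" for x
      using card_rows sym by simp_all
    show "card (?P``{b}) = 2" using card_rows[of b] distinct by auto
    show "x = x'" if "?P``{x} \<subseteq> ?P``{x'}" for x x'
      using that in_UNIV_eq[of x] in_UNIV_eq[of x'] distinct by (auto simp: loop_path_rel_rows)
    show "\<exists>x. z \<in> ?P``{x}" for z
      using in_UNIV_eq[of z] loop_path_rel_rows by blast
    show "M = {} \<or> M = {x. card (?P``{x}) = 2}"
      if rows_M: "\<And>x. x \<in> M \<Longrightarrow> card (?P``{x}) = 2"
        and closed: "\<And>x z. x \<in> M \<Longrightarrow> z \<in> ?P``{x} \<Longrightarrow> ?P\<inverse>``{z} \<subseteq> M" for M
    proof -
      have step: "x' \<in> M" if "x \<in> M" "(x, z) \<in> ?P" "(x', z) \<in> ?P" for x x' z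
        using closed[of x z] that by blast
      have "(b, b) \<in> ?P" "(c, b) \<in> ?P" "(c, d) \<in> ?P" "(d, d) \<in> ?P"
        by (simp_all add: loop_path_rel_def)
      then have "b \<in> M \<longleftrightarrow> c \<in> M" "c \<in> M \<longleftrightarrow> d \<in> M"
        using step by meson+
      moreover have "a \<notin> M" using rows_M[of a] card_rows[of a] by auto
      then have "M \<subseteq> {b, c, d}" using in_UNIV_eq by (metis insertE subsetI)
      moreover have "{x. card (?P``{x}) = 2} = {b, c, d}"
        using card_rows UNIV_eq distinct by auto
      ultimately show ?thesis by (cases "b \<in> M") auto
    qed
  qed
qed

end

section \<open>Kronecker matrices\<close>

text \<open>
  \<open>kron_mat n \<alpha> \<beta> \<gamma>\<close> is \<open>\<alpha> + \<beta> X + \<gamma> Y\<close> on \<open>k\<^sup>n\<^sup>+\<^sup>1 \<oplus> k\<^sup>n\<close> (indices \<open>0..n\<close> and \<open>n+1..2n\<close>),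
  where \<open>X\<close> and \<open>Y\<close> send the \<open>i\<close>-th basis vector of the first summand to the \<open>i\<close>-th,
  resp. \<open>(i-1)\<close>-th, basis vector of the second one (or to 0).
\<close>
definition kron_entry :: "nat \<Rightarrow> 'k::field \<Rightarrow> 'k \<Rightarrow> 'k \<Rightarrow> nat \<Rightarrow> nat \<Rightarrow> 'k" where
  "kron_entry n \<alpha> \<beta> \<gamma> r c =
     (if r = c then \<alpha> else 0) + (if r = c + n + 1 \<and> c < n then \<beta> else 0)
     + (if r = c + n \<and> 0 < c \<and> c \<le> n then \<gamma> else 0)"

definition kron_mat :: "nat \<Rightarrow> 'k::field \<Rightarrow> 'k \<Rightarrow> 'k \<Rightarrow> 'k mat" where
  "kron_mat n \<alpha> \<beta> \<gamma> = mat (2*n+1) (2*n+1) (\<lambda>(r, c). kron_entry n \<alpha> \<beta> \<gamma> r c)"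

lemma kron_mat_carrier [simp]: "kron_mat n \<alpha> \<beta> \<gamma> \<in> carrier_mat (2*n+1) (2*n+1)"
  and kron_mat_dim [simp]: "dim_row (kron_mat n \<alpha> \<beta> \<gamma>) = 2*n+1" "dim_col (kron_mat n \<alpha> \<beta> \<gamma>) = 2*n+1"
  by (simp_all add: kron_mat_def)

lemma kron_mat_index [simp]:
  "r < 2*n+1 \<Longrightarrow> c < 2*n+1 \<Longrightarrow> kron_mat n \<alpha> \<beta> \<gamma> $$ (r, c) = kron_entry n \<alpha> \<beta> \<gamma> r c"
  by (simp add: kron_mat_def)

lemma index_mult_mat_sum:
  assumes "A \<in> carrier_mat N N" "B \<in> carrier_mat N N" "r < N" "c < N"
  shows "(A * B) $$ (r, c) = (\<Sum>k<N. A $$ (r, k) * B $$ (k, c))"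
  using assms by (simp add: scalar_prod_def atLeast0LessThan)

lemma sum_delta_lessThan:
  fixes f :: "nat \<Rightarrow> 'a::comm_monoid_add"
  shows "j < N \<Longrightarrow> (\<Sum>k<N. if k = j then f k else 0) = f j"
  by simp

lemma sum_delta_lessThan_if:
  fixes f :: "nat \<Rightarrow> 'a::comm_monoid_add"
  assumes "P \<Longrightarrow> j < N"
  shows "(\<Sum>k<N. if k = j then (if P then f k else 0) else 0) = (if P then f j else 0)"
  using assms by (cases P) simp_all

lemma sum_kron_entry_row:
  fixes g :: "nat \<Rightarrow> 'k::field"
  assumes r: "r < 2*n+1"
  shows "(\<Sum>k<2*n+1. kron_entry n \<alpha> \<beta> \<gamma> r k * g k) =
    \<alpha> * g r + (if n < r then \<beta> * g (r - n - 1) + \<gamma> * g (r - n) else 0)"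
proof -
  have "(\<Sum>k<2*n+1. kron_entry n \<alpha> \<beta> \<gamma> r k * g k) = (\<Sum>k<2*n+1.
      (if k = r then \<alpha> * g k else 0) + (if k = r - n - 1 then (if n < r then \<beta> * g k else 0) else 0)
      + (if k = r - n then (if n < r then \<gamma> * g k else 0) else 0))"
    by (rule sum.cong) (use r in \<open>auto simp: kron_entry_def distrib_right\<close>)
  also have "\<dots> = \<alpha> * g r + (if n < r then \<beta> * g (r - n - 1) else 0) + (if n < r then \<gamma> * g (r - n) else 0)"
  proof -
    have "r - n - 1 < 2*n+1" "r - n < 2*n+1" using r by arith+
    then show ?thesis using r by (simp only: sum.distrib sum_delta_lessThan sum_delta_lessThan_if)
  qed
  finally show ?thesis by simp
qed

lemma sum_kron_entry_col:
  fixes g :: "nat \<Rightarrow> 'k::field"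
  assumes c: "c < 2*n+1"
  shows "(\<Sum>k<2*n+1. g k * kron_entry n \<alpha> \<beta> \<gamma> k c) =
    g c * \<alpha> + (if c < n then g (c + n + 1) * \<beta> else 0) + (if 0 < c \<and> c \<le> n then g (c + n) * \<gamma> else 0)"
proof -
  have "(\<Sum>k<2*n+1. g k * kron_entry n \<alpha> \<beta> \<gamma> k c) = (\<Sum>k<2*n+1.
      (if k = c then g k * \<alpha> else 0) + (if k = c + n + 1 then (if c < n then g k * \<beta> else 0) else 0)
      + (if k = c + n then (if 0 < c \<and> c \<le> n then g k * \<gamma> else 0) else 0))"
    by (rule sum.cong) (auto simp: kron_entry_def distrib_left)
  also have "\<dots> = g c * \<alpha> + (if c < n then g (c + n + 1) * \<beta> else 0) + (if 0 < c \<and> c \<le> n then g (c + n) * \<gamma> else 0)"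
  proof -
    have "c < n \<Longrightarrow> c + n + 1 < 2*n+1" "0 < c \<and> c \<le> n \<Longrightarrow> c + n < 2*n+1" by arith+
    then show ?thesis using c by (simp only: sum.distrib sum_delta_lessThan sum_delta_lessThan_if)
  qed
  finally show ?thesis .
qed

lemma kron_entry_low: "r \<le> n \<Longrightarrow> kron_entry n \<alpha> \<beta> \<gamma> r c = (if c = r then \<alpha> else 0)"
  by (auto simp: kron_entry_def)

lemma kron_entry_high:
  "n < r \<Longrightarrow> r < 2*n+1 \<Longrightarrow> kron_entry n \<alpha> \<beta> \<gamma> r c =
    (if c = r then \<alpha> else 0) + (if c = r - n - 1 then \<beta> else 0) + (if c = r - n then \<gamma> else 0)"
  by (auto simp: kron_entry_def)

lemma index_mult_kron_mat:
  assumes "Q \<in> carrier_mat (2*n+1) (2*n+1)" "r < 2*n+1" "c < 2*n+1"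
  shows "(Q * kron_mat n \<alpha> \<beta> \<gamma>) $$ (r, c) = Q $$ (r, c) * \<alpha>
    + (if c < n then Q $$ (r, c + n + 1) * \<beta> else 0) + (if 0 < c \<and> c \<le> n then Q $$ (r, c + n) * \<gamma> else 0)"
proof -
  have "(Q * kron_mat n \<alpha> \<beta> \<gamma>) $$ (r, c) = (\<Sum>k<2*n+1. Q $$ (r, k) * kron_mat n \<alpha> \<beta> \<gamma> $$ (k, c))"
    by (rule index_mult_mat_sum[OF assms(1) kron_mat_carrier assms(2,3)])
  also have "\<dots> = (\<Sum>k<2*n+1. Q $$ (r, k) * kron_entry n \<alpha> \<beta> \<gamma> k c)"
    by (rule sum.cong) (use assms in simp_all)
  finally show ?thesis by (simp only: sum_kron_entry_col[OF assms(3)])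
qed

lemma index_kron_mat_mult:
  assumes "Q \<in> carrier_mat (2*n+1) (2*n+1)" "r < 2*n+1" "c < 2*n+1"
  shows "(kron_mat n \<alpha> \<beta> \<gamma> * Q) $$ (r, c) =
    \<alpha> * Q $$ (r, c) + (if n < r then \<beta> * Q $$ (r - n - 1, c) + \<gamma> * Q $$ (r - n, c) else 0)"
proof -
  have "(kron_mat n \<alpha> \<beta> \<gamma> * Q) $$ (r, c) = (\<Sum>k<2*n+1. kron_mat n \<alpha> \<beta> \<gamma> $$ (r, k) * Q $$ (k, c))"
    by (rule index_mult_mat_sum[OF kron_mat_carrier assms])
  also have "\<dots> = (\<Sum>k<2*n+1. kron_entry n \<alpha> \<beta> \<gamma> r k * Q $$ (k, c))"
    by (rule sum.cong) (use assms in simp_all)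
  finally show ?thesis by (simp only: sum_kron_entry_row[OF assms(2)])
qed

lemma kron_mat_mult:
  "kron_mat n \<alpha> \<beta> \<gamma> * kron_mat n \<alpha>' \<beta>' \<gamma>' =
    kron_mat n (\<alpha> * \<alpha>') (\<alpha> * \<beta>' + \<beta> * \<alpha>') (\<alpha> * \<gamma>' + \<gamma> * \<alpha>')"
proof (rule eq_matI)
  fix r c assume "r < dim_row (kron_mat n (\<alpha> * \<alpha>') (\<alpha> * \<beta>' + \<beta> * \<alpha>') (\<alpha> * \<gamma>' + \<gamma> * \<alpha>'))"
    "c < dim_col (kron_mat n (\<alpha> * \<alpha>') (\<alpha> * \<beta>' + \<beta> * \<alpha>') (\<alpha> * \<gamma>' + \<gamma> * \<alpha>'))"
  then have r: "r < 2*n+1" and c: "c < 2*n+1" by simp_all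
  show "(kron_mat n \<alpha> \<beta> \<gamma> * kron_mat n \<alpha>' \<beta>' \<gamma>') $$ (r, c) =
      kron_mat n (\<alpha> * \<alpha>') (\<alpha> * \<beta>' + \<beta> * \<alpha>') (\<alpha> * \<gamma>' + \<gamma> * \<alpha>') $$ (r, c)"
  proof (cases "n < r")
    case True
    then have "r - n - 1 \<le> n" "r - n \<le> n" "r - n - 1 \<noteq> r" "r - n \<noteq> r" "r - n - 1 \<noteq> r - n"
      using r by arith+
    then show ?thesis unfolding index_kron_mat_mult[OF kron_mat_carrier r c] using True r c
      by (cases "c = r"; cases "c = r - n - 1"; cases "c = r - n")
        (simp_all add: kron_entry_low kron_entry_high algebra_simps)
  next
    case False
    then show ?thesis unfolding index_kron_mat_mult[OF kron_mat_carrier r c] using r c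
      by (simp add: kron_entry_low)
  qed
qed simp_all

section \<open>Matrices commuting with the Kronecker matrices\<close>

context
  fixes n :: nat and Q :: "'k::field mat"
  assumes Q_carrier: "Q \<in> carrier_mat (2*n+1) (2*n+1)"
    and commute_X: "Q * kron_mat n 0 1 0 = kron_mat n 0 1 0 * Q"
    and commute_Y: "Q * kron_mat n 0 0 1 = kron_mat n 0 0 1 * Q"
begin

lemma commute_X_index:
  assumes "r < 2*n+1" "c < 2*n+1"
  shows "(if c < n then Q $$ (r, c + n + 1) else 0) = (if n < r then Q $$ (r - n - 1, c) else 0)"
proof -
  have "(Q * kron_mat n 0 1 0) $$ (r, c) = (kron_mat n 0 1 0 * Q) $$ (r, c)" by (simp only: commute_X)
  then show ?thesis unfolding index_mult_kron_mat[OF Q_carrier assms] index_kron_mat_mult[OF Q_carrier assms]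
    by (simp only: mult_1_left mult_1_right mult_zero_left mult_zero_right add_0_left add_0_right if_cancel)
qed

lemma commute_Y_index:
  assumes "r < 2*n+1" "c < 2*n+1"
  shows "(if 0 < c \<and> c \<le> n then Q $$ (r, c + n) else 0) = (if n < r then Q $$ (r - n, c) else 0)"
proof -
  have "(Q * kron_mat n 0 0 1) $$ (r, c) = (kron_mat n 0 0 1 * Q) $$ (r, c)" by (simp only: commute_Y)
  then show ?thesis unfolding index_mult_kron_mat[OF Q_carrier assms] index_kron_mat_mult[OF Q_carrier assms]
    by (simp only: mult_1_left mult_1_right mult_zero_left mult_zero_right add_0_left add_0_right if_cancel)
qed

lemma commuting_diagonal_step:
  assumes "i < n" "c < n"
  shows "Q $$ (i, c) = Q $$ (i + 1, c + 1)"
  using commute_X_index[of "i + n + 1" c] commute_Y_index[of "i + n + 1" "c + 1"] assms by simp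

lemma commuting_diagonal_shift:
  "i + k \<le> n \<Longrightarrow> c + k \<le> n \<Longrightarrow> Q $$ (i, c) = Q $$ (i + k, c + k)"
proof (induction k)
  case (Suc k)
  then have "Q $$ (i, c) = Q $$ (i + k, c + k)" by simp
  also have "\<dots> = Q $$ (i + k + 1, c + k + 1)" using Suc.prems by (intro commuting_diagonal_step) auto
  finally show ?case by simp
qed simp

text \<open>\<open>Q\<close> is constant along the diagonals of the top rows, and each off-diagonal one runs into
  an entry that the commutation relations force to vanish.\<close>
lemma commuting_top_index:
  assumes "r \<le> n" "c < 2*n+1"
  shows "Q $$ (r, c) = (if c = r then Q $$ (0, 0) else 0)"
proof (cases "c \<le> n")
  case True
  consider "c = r" | "c < r" | "r < c" by arith
  then show ?thesis
  proof cases
    case 1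
    then show ?thesis using commuting_diagonal_shift[of 0 r 0] assms by simp
  next
    case 2
    define i where "i = r - c - 1"
    have r_eq: "r = i + 1 + c" using 2 unfolding i_def by simp
    have "Q $$ (r, c) = Q $$ (i + 1, 0)"
      using commuting_diagonal_shift[of "i + 1" c 0] assms r_eq by simp
    also have "\<dots> = 0"
      using commute_Y_index[of "i + n + 1" 0] r_eq assms by simp
    finally show ?thesis using 2 by simp
  next
    case 3
    define k where "k = n - c"
    then have k: "r + k < n" "c + k = n" using 3 True by simp_all
    have "Q $$ (r, c) = Q $$ (r + k, n)"
      using commuting_diagonal_shift[of r k c] k by simp
    also have "\<dots> = 0"
      using commute_X_index[of "r + k + n + 1" n] k by simp
    finally show ?thesis using 3 by simp
  qed
next
  case False
  define c' where "c' = c - n - 1"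
  then have "c = c' + n + 1" "c' < n" using False assms by simp_all
  then show ?thesis using commute_X_index[of r c'] assms by simp
qed

lemma commuting_scalar_index:
  assumes "r < 2*n+1" "c < 2*n+1" "\<not> (n < r \<and> c \<le> n)"
  shows "Q $$ (r, c) = (if r = c then Q $$ (0, 0) else 0)"
proof (cases "r \<le> n")
  case True
  then show ?thesis using commuting_top_index[OF True assms(2)] by (simp add: eq_commute[of r c])
next
  case False
  define r' c' where "r' = r - n - 1" and "c' = c - n - 1"
  then have rc: "r = r' + n + 1" "c = c' + n + 1" "r' \<le> n" "c' < n" using False assms by simp_all
  then have "Q $$ (r, c) = Q $$ (r', c')"
    using commute_X_index[of r c'] assms by simp
  also have "\<dots> = (if c' = r' then Q $$ (0, 0) else 0)"
    using rc by (intro commuting_top_index) auto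
  finally show ?thesis using rc by simp
qed

lemma commuting_idempotent_trivial:
  assumes idem: "Q * Q = Q"
  shows "Q = 0\<^sub>m (2*n+1) (2*n+1) \<or> Q = 1\<^sub>m (2*n+1)"
proof -
  define q where "q = Q $$ (0, 0)"
  have square: "Q $$ (r, c) = (\<Sum>k<2*n+1. Q $$ (r, k) * Q $$ (k, c))" if "r < 2*n+1" "c < 2*n+1" for r c
    using index_mult_mat_sum[OF Q_carrier Q_carrier that] unfolding idem .
  have scalar: "Q $$ (r, c) = (if r = c then q else 0)"
    if "r < 2*n+1" "c < 2*n+1" "\<not> (n < r \<and> c \<le> n)" for r c
    using commuting_scalar_index[OF that] unfolding q_def .
  have "q = (\<Sum>k<2*n+1. Q $$ (0, k) * Q $$ (k, 0))"
    unfolding q_def by (rule square) simp_all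
  also have "\<dots> = (\<Sum>k<2*n+1. if k = 0 then q * Q $$ (k, 0) else 0)"
  proof (rule sum.cong)
    fix k assume "k \<in> {..<2*n+1}"
    then have "Q $$ (0, k) = (if 0 = k then q else 0)" by (intro scalar) simp_all
    then show "Q $$ (0, k) * Q $$ (k, 0) = (if k = 0 then q * Q $$ (k, 0) else 0)"
      by simp
  qed simp
  also have "\<dots> = q * q" by (subst sum_delta_lessThan) (simp_all add: q_def)
  finally have qq: "q * q = q" ..
  have lower: "Q $$ (r, c) = 0" if "n < r" "r < 2*n+1" "c \<le> n" for r c
  proof -
    have "Q $$ (r, c) = (\<Sum>k<2*n+1. Q $$ (r, k) * Q $$ (k, c))"
      using that by (intro square) simp_all
    also have "\<dots> = (\<Sum>k<2*n+1. (if k = c then Q $$ (r, k) * q else 0)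
        + (if k = r then q * Q $$ (k, c) else 0))"
    proof (rule sum.cong)
      fix k assume "k \<in> {..<2*n+1}"
      then have k: "k < 2*n+1" by simp
      show "Q $$ (r, k) * Q $$ (k, c) = (if k = c then Q $$ (r, k) * q else 0)
        + (if k = r then q * Q $$ (k, c) else 0)"
      proof (cases "k \<le> n")
        case True
        then have "Q $$ (k, c) = (if k = c then q else 0)" using k that by (intro scalar) simp_all
        then show ?thesis using True that by simp
      next
        case False
        then have "Q $$ (r, k) = (if r = k then q else 0)" using k that by (intro scalar) simp_all
        then show ?thesis using False that by auto
      qed
    qed simp
    also have "\<dots> = Q $$ (r, c) * q + q * Q $$ (r, c)"
      using that by (simp only: sum.distrib sum_delta_lessThan[of c] sum_delta_lessThan[of r])
    finally have "Q $$ (r, c) = 2 * q * Q $$ (r, c)" by (simp add: algebra_simps)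
    then have zero: "(1 - 2 * q) * Q $$ (r, c) = 0" by (simp add: algebra_simps)
    \<comment> \<open>\<open>1 - 2 q\<close> is its own inverse, whatever the characteristic\<close>
    have "(1 - 2 * q) * (1 - 2 * q) = 1 - 4 * q + 4 * (q * q)" by (simp add: algebra_simps)
    also have "\<dots> = 1" unfolding qq by simp
    finally have "(1 - 2 * q) * (1 - 2 * q) = 1" .
    then have "Q $$ (r, c) = (1 - 2 * q) * ((1 - 2 * q) * Q $$ (r, c))"
      by (simp only: mult.assoc[symmetric] mult_1_left)
    then show ?thesis unfolding zero by simp
  qed
  have Q_scalar: "Q = q \<cdot>\<^sub>m 1\<^sub>m (2*n+1)"
  proof (rule eq_matI)
    fix r c assume "r < dim_row (q \<cdot>\<^sub>m 1\<^sub>m (2*n+1) :: 'k mat)" "c < dim_col (q \<cdot>\<^sub>m 1\<^sub>m (2*n+1) :: 'k mat)"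
    then have rc: "r < 2*n+1" "c < 2*n+1" by simp_all
    show "Q $$ (r, c) = (q \<cdot>\<^sub>m 1\<^sub>m (2*n+1)) $$ (r, c)"
    proof (cases "n < r \<and> c \<le> n")
      case True
      then show ?thesis using rc lower[of r c] by simp
    next
      case False
      then show ?thesis using rc scalar[of r c] by simp
    qed
  qed (use Q_carrier in simp_all)
  have "q * (q - 1) = 0" using qq by (simp add: algebra_simps)
  then consider "q = 0" | "q = 1" by fastforce
  then show ?thesis using Q_scalar by cases auto
qed

end

section \<open>Representations through \<open>k[x,y]/(x,y)\<^sup>2\<close>\<close>

lemma kron_mat_add: "kron_mat n \<alpha> \<beta> \<gamma> + kron_mat n \<alpha>' \<beta>' \<gamma>' = kron_mat n (\<alpha> + \<alpha>') (\<beta> + \<beta>') (\<gamma> + \<gamma>')"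
  by (rule eq_matI) (auto simp: kron_entry_def)

lemma kron_mat_smult: "k \<cdot>\<^sub>m kron_mat n \<alpha> \<beta> \<gamma> = kron_mat n (k * \<alpha>) (k * \<beta>) (k * \<gamma>)"
  by (rule eq_matI) (auto simp: kron_entry_def algebra_simps)

lemma kron_mat_one: "kron_mat n 1 0 0 = 1\<^sub>m (2*n+1)"
  by (rule eq_matI) (auto simp: kron_entry_def)

definition malg_mass :: "'x rel set \<Rightarrow> ('x::finite, 'k::field) malg \<Rightarrow> 'k" where
  "malg_mass X f = (\<Sum>T\<in>X. f T)"

lemma malg_mass_malg_add: "malg_mass X (malg_add f g) = malg_mass X f + malg_mass X g"
  by (simp add: malg_mass_def malg_add_def sum.distrib)

lemma malg_mass_malg_smult: "malg_mass X (malg_smult c f) = c * malg_mass X f"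
  by (simp add: malg_mass_def malg_smult_def sum_distrib_left)

lemma malg_mass_indicator: "malg_mass X (\<lambda>S. if S = T then 1 else 0) = (if T \<in> X then 1 else 0)"
  by (simp add: malg_mass_def)

lemma malg_mass_malg_one: "malg_mass X malg_one = (if Id \<in> X then 1 else 0)"
  unfolding malg_one_def by (rule malg_mass_indicator)

lemma malg_mass_malg_mult:
  "malg_mass X (malg_mult f g) = (\<Sum>p\<in>{p. fst p O snd p \<in> X}. f (fst p) * g (snd p))"
proof -
  have "malg_mass X (malg_mult f g) =
      (\<Sum>T\<in>X. \<Sum>p\<in>{p \<in> {p. fst p O snd p \<in> X}. fst p O snd p = T}. f (fst p) * g (snd p))"
    unfolding malg_mass_def malg_mult_def
    by (intro sum.cong refl) (auto intro: sum.cong)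
  also have "\<dots> = (\<Sum>p\<in>{p. fst p O snd p \<in> X}. f (fst p) * g (snd p))"
    by (rule sum.group) auto
  finally show ?thesis .
qed

lemma sum_product_pairs:
  "(\<Sum>p\<in>X \<times> Y. f (fst p) * g (snd p)) = (\<Sum>x\<in>X. f x) * (\<Sum>y\<in>Y. g y :: 'k::field)"
  by (simp add: sum_product sum.cartesian_product case_prod_beta)

lemma malg_mass_malg_mult_group:
  assumes "\<And>R S. R O S \<in> G \<longleftrightarrow> R \<in> G \<and> S \<in> G"
  shows "malg_mass G (malg_mult f g) = malg_mass G f * malg_mass G g"
proof -
  have "{p. fst p O snd p \<in> G} = G \<times> G" using assms by auto
  then show ?thesis unfolding malg_mass_malg_mult by (simp add: sum_product_pairs malg_mass_def)
qed

lemma malg_mass_malg_mult_orbit: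
  assumes "\<And>R S. R O S \<in> A \<longleftrightarrow> R \<in> G \<and> S \<in> A \<or> R \<in> A \<and> S \<in> G" and "G \<inter> A = {}"
  shows "malg_mass A (malg_mult f g) = malg_mass G f * malg_mass A g + malg_mass A f * malg_mass G g"
proof -
  have "{p. fst p O snd p \<in> A} = G \<times> A \<union> A \<times> G" using assms(1) by auto
  moreover have "(G \<times> A) \<inter> (A \<times> G) = {}" using assms(2) by auto
  ultimately show ?thesis
    unfolding malg_mass_malg_mult by (simp add: sum.union_disjoint sum_product_pairs malg_mass_def)
qed

text \<open>Under the hypotheses of \<open>is_rep_kron_rep\<close>, \<open>f \<mapsto> (malg_mass G f, malg_mass A f, malg_mass B f)\<close>
  is an algebra map onto \<open>k[x,y]/(x,y)\<^sup>2\<close>, and \<open>kron_rep\<close> composes it with the Kronecker module.\<close>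
definition kron_rep :: "nat \<Rightarrow> 'x rel set \<Rightarrow> 'x rel set \<Rightarrow> 'x rel set \<Rightarrow> ('x::finite, 'k::field) malg \<Rightarrow> 'k mat" where
  "kron_rep n G A B f = kron_mat n (malg_mass G f) (malg_mass A f) (malg_mass B f)"

lemma is_rep_kron_rep:
  assumes G: "\<And>R S. R O S \<in> G \<longleftrightarrow> R \<in> G \<and> S \<in> G"
    and A: "\<And>R S. R O S \<in> A \<longleftrightarrow> R \<in> G \<and> S \<in> A \<or> R \<in> A \<and> S \<in> G"
    and B: "\<And>R S. R O S \<in> B \<longleftrightarrow> R \<in> G \<and> S \<in> B \<or> R \<in> B \<and> S \<in> G"
    and "Id \<in> G" "G \<inter> A = {}" "G \<inter> B = {}"
  shows "is_rep (2*n+1) (kron_rep n G A B :: ('x::finite, 'k::field) malg \<Rightarrow> 'k mat)"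
  unfolding is_rep_def kron_rep_def
proof (intro conjI allI)
  show "kron_mat n (malg_mass G f) (malg_mass A f) (malg_mass B f) \<in> carrier_mat (2*n+1) (2*n+1)" for f :: "('x, 'k) malg"
    by (rule kron_mat_carrier)
qed (use assms in \<open>simp_all add: kron_mat_add kron_mat_smult kron_mat_mult kron_mat_one
  malg_mass_malg_add malg_mass_malg_smult malg_mass_malg_mult_group[OF G] malg_mass_malg_mult_orbit[OF A]
  malg_mass_malg_mult_orbit[OF B] malg_mass_malg_one disjoint_iff algebra_simps\<close>)

section \<open>Indecomposability\<close>

lemma mult_assoc_dim:
  assumes "dim_col A = dim_row B" "dim_col B = dim_row C"
  shows "A * B * C = A * (B * (C :: 'a::semiring_0 mat))"
proof -
  have "A \<in> carrier_mat (dim_row A) (dim_col A)" "B \<in> carrier_mat (dim_col A) (dim_col B)"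
    "C \<in> carrier_mat (dim_col B) (dim_col C)"
    using assms unfolding carrier_mat_def by auto
  then show ?thesis by (rule assoc_mult_mat)
qed

lemma block_diag_projection_commute:
  fixes A1 A2 :: "'a::semiring_1 mat"
  assumes "A1 \<in> carrier_mat n1 n1" "A2 \<in> carrier_mat n2 n2"
  shows "four_block_mat (1\<^sub>m n1) (0\<^sub>m n1 n2) (0\<^sub>m n2 n1) (0\<^sub>m n2 n2) * four_block_mat A1 (0\<^sub>m n1 n2) (0\<^sub>m n2 n1) A2
       = four_block_mat A1 (0\<^sub>m n1 n2) (0\<^sub>m n2 n1) A2 * four_block_mat (1\<^sub>m n1) (0\<^sub>m n1 n2) (0\<^sub>m n2 n1) (0\<^sub>m n2 n2)"
proof -
  have "four_block_mat (1\<^sub>m n1) (0\<^sub>m n1 n2) (0\<^sub>m n2 n1) (0\<^sub>m n2 n2) * four_block_mat A1 (0\<^sub>m n1 n2) (0\<^sub>m n2 n1) A2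
     = four_block_mat (1\<^sub>m n1 * A1 + 0\<^sub>m n1 n2 * 0\<^sub>m n2 n1) (1\<^sub>m n1 * 0\<^sub>m n1 n2 + 0\<^sub>m n1 n2 * A2)
        (0\<^sub>m n2 n1 * A1 + 0\<^sub>m n2 n2 * 0\<^sub>m n2 n1) (0\<^sub>m n2 n1 * 0\<^sub>m n1 n2 + 0\<^sub>m n2 n2 * A2)"
    by (rule mult_four_block_mat) (use assms in auto)
  also have "\<dots> = four_block_mat (A1 * 1\<^sub>m n1 + 0\<^sub>m n1 n2 * 0\<^sub>m n2 n1) (A1 * 0\<^sub>m n1 n2 + 0\<^sub>m n1 n2 * 0\<^sub>m n2 n2)
        (0\<^sub>m n2 n1 * 1\<^sub>m n1 + A2 * 0\<^sub>m n2 n1) (0\<^sub>m n2 n1 * 0\<^sub>m n1 n2 + A2 * 0\<^sub>m n2 n2)"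
    using assms by simp
  also have "\<dots> = four_block_mat A1 (0\<^sub>m n1 n2) (0\<^sub>m n2 n1) A2 * four_block_mat (1\<^sub>m n1) (0\<^sub>m n1 n2) (0\<^sub>m n2 n1) (0\<^sub>m n2 n2)"
    by (rule mult_four_block_mat[symmetric]) (use assms in auto)
  finally show ?thesis .
qed

lemma block_projection_idem:
  "four_block_mat (1\<^sub>m n1) (0\<^sub>m n1 n2) (0\<^sub>m n2 n1) (0\<^sub>m n2 n2) * four_block_mat (1\<^sub>m n1) (0\<^sub>m n1 n2) (0\<^sub>m n2 n1) (0\<^sub>m n2 n2)
    = (four_block_mat (1\<^sub>m n1) (0\<^sub>m n1 n2) (0\<^sub>m n2 n1) (0\<^sub>m n2 n2) :: 'a::semiring_1 mat)"
proof -
  have "four_block_mat (1\<^sub>m n1) (0\<^sub>m n1 n2) (0\<^sub>m n2 n1) (0\<^sub>m n2 n2) * four_block_mat (1\<^sub>m n1) (0\<^sub>m n1 n2) (0\<^sub>m n2 n1) (0\<^sub>m n2 n2)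
    = four_block_mat (1\<^sub>m n1 * 1\<^sub>m n1 + 0\<^sub>m n1 n2 * 0\<^sub>m n2 n1) (1\<^sub>m n1 * 0\<^sub>m n1 n2 + 0\<^sub>m n1 n2 * 0\<^sub>m n2 n2)
        (0\<^sub>m n2 n1 * 1\<^sub>m n1 + 0\<^sub>m n2 n2 * 0\<^sub>m n2 n1) (0\<^sub>m n2 n1 * 0\<^sub>m n1 n2 + 0\<^sub>m n2 n2 * (0\<^sub>m n2 n2 :: 'a mat))"
    by (rule mult_four_block_mat) auto
  then show ?thesis by simp
qed

lemma conjugate_commuting_idempotent:
  fixes P P' E A D :: "'a::semiring_1 mat"
  assumes carrier: "P \<in> carrier_mat N N" "P' \<in> carrier_mat N N" "E \<in> carrier_mat N N"
      "A \<in> carrier_mat N N" "D \<in> carrier_mat N N"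
    and inverse: "P * P' = 1\<^sub>m N" "P' * P = 1\<^sub>m N"
    and intertwine: "P * A = D * P" and commute: "E * D = D * E"
  shows "P' * E * P * A = A * (P' * E * P)"
proof -
  have dims: "dim_row P = N" "dim_col P = N" "dim_row P' = N" "dim_col P' = N" "dim_row E = N"
    "dim_col E = N" "dim_row A = N" "dim_col A = N" "dim_row D = N" "dim_col D = N"
    using carrier by auto
  have "A * P' = (P' * P) * A * P'" using inverse by (simp add: dims)
  also have "\<dots> = P' * (D * P) * P'" using intertwine by (simp add: mult_assoc_dim dims)
  also have "\<dots> = P' * D * (P * P')" by (simp add: mult_assoc_dim dims)
  finally have AP': "A * P' = P' * D" using inverse by (simp add: dims)
  have "P' * E * P * A = P' * (E * D) * P" using intertwine by (simp add: mult_assoc_dim dims)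
  also have "\<dots> = (P' * D) * E * P" using commute by (simp add: mult_assoc_dim dims)
  finally show ?thesis by (simp add: AP'[symmetric] mult_assoc_dim dims)
qed

lemma conjugate_idempotent:
  fixes P P' E :: "'a::semiring_1 mat"
  assumes carrier: "P \<in> carrier_mat N N" "P' \<in> carrier_mat N N" "E \<in> carrier_mat N N"
    and inverse: "P * P' = 1\<^sub>m N" and idem: "E * E = E"
  shows "(P' * E * P) * (P' * E * P) = P' * E * P" "P * (P' * E * P) * P' = E"
proof -
  have dims: "dim_row P = N" "dim_col P = N" "dim_row P' = N" "dim_col P' = N" "dim_row E = N" "dim_col E = N"
    using carrier by auto
  have "(P' * E * P) * (P' * E * P) = P' * E * (P * P') * E * P" by (simp add: mult_assoc_dim dims)
  also have "\<dots> = P' * (E * E) * P" using inverse by (simp add: mult_assoc_dim dims)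
  finally show "(P' * E * P) * (P' * E * P) = P' * E * P" unfolding idem .
  have "P * (P' * E * P) * P' = (P * P') * E * (P * P')" by (simp add: mult_assoc_dim dims)
  then show "P * (P' * E * P) * P' = E" using inverse by (simp add: dims)
qed

lemma idempotent_of_decomposition:
  fixes \<rho> :: "('x::finite, 'k::field) malg \<Rightarrow> 'k mat"
  assumes rep: "is_rep N \<rho>" and rep1: "is_rep n1 \<rho>1" and rep2: "is_rep n2 \<rho>2"
    and n1: "0 < n1" and n2: "0 < n2"
    and iso: "rep_iso N \<rho> (n1 + n2) (rep_dsum n1 \<rho>1 n2 \<rho>2)"
  obtains Q where "Q \<in> carrier_mat N N" "Q * Q = Q" "\<And>f. Q * \<rho> f = \<rho> f * Q"
    "Q \<noteq> 0\<^sub>m N N" "Q \<noteq> 1\<^sub>m N"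
proof -
  have N: "N = n1 + n2" using iso unfolding rep_iso_def by simp
  obtain P where P: "P \<in> carrier_mat N N" "invertible_mat P"
    and intertwine: "\<And>f. P * \<rho> f = rep_dsum n1 \<rho>1 n2 \<rho>2 f * P"
    using iso unfolding rep_iso_def by blast
  obtain P' where PP': "P * P' = 1\<^sub>m N" and P'P: "P' * P = 1\<^sub>m (dim_row P')"
    using P unfolding invertible_mat_def inverts_mat_def by auto
  have "dim_row P' = N" "dim_col P' = N"
    using P P'P PP' by (metis carrier_matD(2) index_mult_mat(3) index_one_mat(3), metis index_mult_mat(3) index_one_mat(3))
  then have P': "P' \<in> carrier_mat N N" and P'P: "P' * P = 1\<^sub>m N" using P'P by auto
  have \<rho>1: "\<rho>1 f \<in> carrier_mat n1 n1" for f using rep1 unfolding is_rep_def by blast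
  have \<rho>2: "\<rho>2 f \<in> carrier_mat n2 n2" for f using rep2 unfolding is_rep_def by blast
  define E :: "'k mat" where "E = four_block_mat (1\<^sub>m n1) (0\<^sub>m n1 n2) (0\<^sub>m n2 n1) (0\<^sub>m n2 n2)"
  have E: "E \<in> carrier_mat N N" unfolding E_def N by simp
  have EE: "E * E = E" unfolding E_def by (rule block_projection_idem)
  define Q where "Q = P' * E * P"
  have Q_idem: "Q * Q = Q" and E_eq: "P * Q * P' = E"
    unfolding Q_def using conjugate_idempotent[OF P(1) P' E PP' EE] by simp_all
  have "Q \<in> carrier_mat N N" unfolding Q_def using P' E P by simp
  moreover note Q_idem
  moreover have "Q * \<rho> f = \<rho> f * Q" for f
  proof -
    have "E * rep_dsum n1 \<rho>1 n2 \<rho>2 f = rep_dsum n1 \<rho>1 n2 \<rho>2 f * E"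
      unfolding E_def rep_dsum_def by (rule block_diag_projection_commute[OF \<rho>1 \<rho>2])
    moreover have "\<rho> f \<in> carrier_mat N N" using rep unfolding is_rep_def by blast
    moreover have "rep_dsum n1 \<rho>1 n2 \<rho>2 f \<in> carrier_mat N N" unfolding rep_dsum_def N using \<rho>1 \<rho>2 by simp
    ultimately show ?thesis
      unfolding Q_def using conjugate_commuting_idempotent[OF P(1) P' E _ _ PP' P'P intertwine] by blast
  qed
  moreover have "Q \<noteq> 0\<^sub>m N N"
  proof
    assume "Q = 0\<^sub>m N N"
    then have "E = 0\<^sub>m N N" using E_eq P P' by simp
    moreover have "E $$ (0, 0) = 1" unfolding E_def using n1 n2 by simp
    ultimately show False using n1 N by simp
  qed
  moreover have "Q \<noteq> 1\<^sub>m N"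
  proof
    assume "Q = 1\<^sub>m N"
    then have "E = 1\<^sub>m N" using E_eq P PP' by simp
    moreover have "E $$ (n1, n1) = 0" unfolding E_def using n1 n2 by simp
    ultimately show False using n2 N by simp
  qed
  ultimately show ?thesis by (rule that)
qed

lemma indecomposableI:
  fixes \<rho> :: "('x::finite, 'k::field) malg \<Rightarrow> 'k mat"
  assumes "is_rep N \<rho>" "0 < N"
    and trivial: "\<And>Q. Q \<in> carrier_mat N N \<Longrightarrow> Q * Q = Q \<Longrightarrow> (\<And>f. Q * \<rho> f = \<rho> f * Q) \<Longrightarrow>
      Q = 0\<^sub>m N N \<or> Q = 1\<^sub>m N"
  shows "indecomposable N \<rho>"
  unfolding indecomposable_def
proof (intro conjI notI)
  assume "\<exists>n1 n2 \<rho>1 \<rho>2. 0 < n1 \<and> 0 < n2 \<and> is_rep n1 \<rho>1 \<and> is_rep n2 \<rho>2 \<and>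
    rep_iso N \<rho> (n1 + n2) (rep_dsum n1 \<rho>1 n2 \<rho>2)"
  then obtain n1 n2 and \<rho>1 \<rho>2 :: "('x, 'k) malg \<Rightarrow> 'k mat" where
    decomp: "is_rep n1 \<rho>1" "is_rep n2 \<rho>2" "0 < n1" "0 < n2" "rep_iso N \<rho> (n1 + n2) (rep_dsum n1 \<rho>1 n2 \<rho>2)"
    by blast
  obtain Q where "Q \<in> carrier_mat N N" "Q * Q = Q" "\<And>f. Q * \<rho> f = \<rho> f * Q"
    and nontrivial: "Q \<noteq> 0\<^sub>m N N" "Q \<noteq> 1\<^sub>m N"
    using idempotent_of_decomposition[OF \<open>is_rep N \<rho>\<close> decomp] by blast
  then show False using trivial by blast
qed (use assms in simp_all)

lemma indecomposable_kron:
  fixes \<rho> :: "('x::finite, 'k::field) malg \<Rightarrow> 'k mat"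
  assumes "is_rep (2*n+1) \<rho>" "\<rho> f\<^sub>X = kron_mat n 0 1 0" "\<rho> f\<^sub>Y = kron_mat n 0 0 1"
  shows "indecomposable (2*n+1) \<rho>"
proof (rule indecomposableI)
  fix Q assume Q: "Q \<in> carrier_mat (2*n+1) (2*n+1)" and idem: "Q * Q = Q"
    and commute: "\<And>f. Q * \<rho> f = \<rho> f * Q"
  have "Q * kron_mat n 0 1 0 = kron_mat n 0 1 0 * Q" "Q * kron_mat n 0 0 1 = kron_mat n 0 0 1 * Q"
    using commute[of f\<^sub>X] commute[of f\<^sub>Y] assms(2,3) by simp_all
  then show "Q = 0\<^sub>m (2*n+1) (2*n+1) \<or> Q = 1\<^sub>m (2*n+1)"
    using commuting_idempotent_trivial[OF Q _ _ idem] by blast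
qed (use assms in simp_all)

section \<open>Infinite representation type\<close>

lemma rep_iso_refl:
  assumes "is_rep n \<rho>"
  shows "rep_iso n \<rho> n \<rho>"
proof -
  have "\<rho> f \<in> carrier_mat n n" for f using assms unfolding is_rep_def by blast
  then have "1\<^sub>m n * \<rho> f = \<rho> f * 1\<^sub>m n" for f
    using left_mult_one_mat right_mult_one_mat by metis
  moreover have "invertible_mat (1\<^sub>m n :: 'k::field mat)"
    unfolding invertible_mat_def inverts_mat_def by (intro conjI exI[of _ "1\<^sub>m n"]) auto
  ultimately show ?thesis unfolding rep_iso_def by (intro conjI refl bexI[of _ "1\<^sub>m n"]) auto
qed

lemma infinite_rep_typeI:
  fixes \<rho> :: "nat \<Rightarrow> ('x::finite, 'k::field) malg \<Rightarrow> 'k mat"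
  assumes "inj d" "\<And>m. indecomposable (d m) (\<rho> m)"
  shows "infinite_rep_type TYPE('x) TYPE('k)"
proof -
  define F where "F m = (iso_rel :: ((nat \<times> (('x, 'k) malg \<Rightarrow> 'k mat)) \<times> _) set) `` {(d m, \<rho> m)}" for m
  have "F m \<in> indec_reps // iso_rel" for m
    unfolding F_def by (rule quotientI) (use assms(2) in \<open>simp add: indec_reps_def\<close>)
  then have classes: "range F \<subseteq> indec_reps // iso_rel" by blast
  have "inj F"
  proof (rule injI)
    fix m m' assume "F m = F m'"
    have "is_rep (d m) (\<rho> m)" using assms(2) unfolding indecomposable_def by blast
    then have "(d m, \<rho> m) \<in> F m" unfolding F_def iso_rel_def by (simp add: rep_iso_refl)
    then have "(d m, \<rho> m) \<in> F m'" using \<open>F m = F m'\<close> by simp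
    then have "rep_iso (d m') (\<rho> m') (d m) (\<rho> m)" unfolding F_def iso_rel_def by simp
    then show "m = m'" using \<open>inj d\<close> unfolding rep_iso_def by (simp add: inj_eq)
  qed
  then have "infinite (range F)" using finite_imageD infinite_UNIV_nat by blast
  with classes have "infinite ((indec_reps :: (nat \<times> (('x, 'k) malg \<Rightarrow> 'k mat)) set) // iso_rel)"
    using infinite_super by blast
  then show ?thesis unfolding infinite_rep_type_def .
qed

lemma infinite_rep_type_of_kronecker_quotient:
  fixes G A B :: "'x::finite rel set"
  assumes G: "\<And>R S. R O S \<in> G \<longleftrightarrow> R \<in> G \<and> S \<in> G"
    and A: "\<And>R S. R O S \<in> A \<longleftrightarrow> R \<in> G \<and> S \<in> A \<or> R \<in> A \<and> S \<in> G"
    and B: "\<And>R S. R O S \<in> B \<longleftrightarrow> R \<in> G \<and> S \<in> B \<or> R \<in> B \<and> S \<in> G"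
    and "Id \<in> G" "G \<inter> A = {}" "G \<inter> B = {}" "A \<inter> B = {}" "T\<^sub>A \<in> A" "T\<^sub>B \<in> B"
  shows "infinite_rep_type TYPE('x) TYPE('k::field)"
proof (rule infinite_rep_typeI)
  show "inj (\<lambda>m::nat. 2*m+1)" by (rule injI) simp
  fix m
  have "kron_rep m G A B (\<lambda>S. if S = T\<^sub>A then 1 else 0) = (kron_mat m 0 1 0 :: 'k mat)"
    "kron_rep m G A B (\<lambda>S. if S = T\<^sub>B then 1 else 0) = (kron_mat m 0 0 1 :: 'k mat)"
    using assms(5-) by (auto simp: kron_rep_def malg_mass_indicator)
  with is_rep_kron_rep[OF G A B assms(4-6)]
  show "indecomposable (2*m+1) (kron_rep m G A B :: ('x, 'k) malg \<Rightarrow> 'k mat)"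
    by (rule indecomposable_kron)
qed

lemma infinite_rep_type_of_irreducible_rels:
  fixes P Q :: "'x::finite rel"
  assumes "irreducible_rel P" "irreducible_rel Q"
    and "range (\<lambda>x. card (P``{x})) \<noteq> range (\<lambda>x. card (Q``{x}))"
  shows "infinite_rep_type TYPE('x) TYPE('k::field)"
proof (rule infinite_rep_type_of_kronecker_quotient)
  show "R O S \<in> {R. invertible_rel R} \<longleftrightarrow> R \<in> {R. invertible_rel R} \<and> S \<in> {R. invertible_rel R}"
    for R S :: "'x rel"
    using invertible_rel_relcomp invertible_rel_relcompD by blast
  show "R O S \<in> unit_orbit P \<longleftrightarrow>
      R \<in> {R. invertible_rel R} \<and> S \<in> unit_orbit P \<or> R \<in> unit_orbit P \<and> S \<in> {R. invertible_rel R}"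
    "R O S \<in> unit_orbit Q \<longleftrightarrow>
      R \<in> {R. invertible_rel R} \<and> S \<in> unit_orbit Q \<or> R \<in> unit_orbit Q \<and> S \<in> {R. invertible_rel R}"
    for R S :: "'x rel"
    using relcomp_in_unit_orbit_iff assms(1,2) by simp_all
  show "{R. invertible_rel R} \<inter> unit_orbit P = {}" "{R. invertible_rel R} \<inter> unit_orbit Q = {}"
    using unit_orbit_not_invertible assms(1,2) by blast+
  show "unit_orbit P \<inter> unit_orbit Q = {}" using assms(3) by (rule unit_orbits_disjoint)
qed (auto intro: invertible_rel_Id self_in_unit_orbit)

lemma card_UNIV_4_obtain:
  assumes "card (UNIV :: 'x set) = 4"
  obtains a b c d :: "'x::finite" where "distinct [a, b, c, d]" "UNIV = {a, b, c, d}"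
proof -
  obtain a B where aB: "(UNIV :: 'x set) = insert a B" "a \<notin> B" "card B = 3"
    using assms card_Suc_eq[of "UNIV :: 'x set" 3] by auto
  then obtain x y z where "B = {x, y, z}" "x \<noteq> y" "y \<noteq> z" "x \<noteq> z"
    using card_3_iff[of B] by blast
  with aB show ?thesis by (intro that[of a x y z]) auto
qed

theorem theorem6:
  assumes "card (UNIV :: 'x::finite set) = 4"
  shows "infinite_rep_type TYPE('x) TYPE('k::field)"
proof -
  obtain a b c d :: 'x where "distinct [a, b, c, d]" "UNIV = {a, b, c, d}"
    using card_UNIV_4_obtain[OF assms] by blast
  then show ?thesis
    by (intro infinite_rep_type_of_irreducible_rels[of "path_rel a b c d" "loop_path_rel a b c d"]
        irreducible_path_rel irreducible_loop_path_rel row_cards_path_rel_loop_path_rel)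
qed

end
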